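(* Let $h:\Gamma\to\mathbb{T}A$ be a simple parametrized tropical curve with gcd $\delta_\Gamma$. Then $$\sum_{V\in V(\Gamma)}\frac{m_V}{\delta_\Gamma}\equiv 0\pmod 2.$$
   Context: $N$ is an oriented rank $2$ lattice; $\mathbb{T}A=N_\mathbb{R}/\Lambda$ with $\Lambda$ a full-rank lattice in $N_\mathbb{R}$. A parametrized tropical curve $h:\Gamma\to\mathbb{T}A$ is a map from a compact connected finite metric graph, affine on each edge with slope $u_e=w_eu'_e\in N$ ($u'_e$ primitive, $w_e\in\mathbb{Z}_{>0}$ the weight), balanced at each vertex. It is simple if $\Gamma$ is trivalent and $h$ an immersion. Its gcd $\delta_\Gamma$ is the gcd of the weights of its edges. For a trivalent vertex $V$ with outgoing slopes $a_V,b_V,-a_V-b_V$ (weights included), its multiplicity is $m_V=|\det(a_V,b_V)|$. *)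

theory Defs
  imports "HOL-Analysis.Analysis"
begin

text \<open>The lattice N is identified with int \<times> int (standard orientation);
  N_R = real \<times> real.  The torus TA = N_R / Lambda, with Lambda spanned by
  linearly independent vectors b1 b2.  Points of TA are represented by lifts.\<close>

type_synonym latN = "int \<times> int"

definition det2 :: "latN \<Rightarrow> latN \<Rightarrow> int" where
  "det2 a b = fst a * snd b - snd a * fst b"

definition toR :: "latN \<Rightarrow> real \<times> real" where
  "toR a = (real_of_int (fst a), real_of_int (snd a))"

text \<open>weight w_e: u_e = w_e * u'_e with u'_e primitive\<close>
definition weight :: "latN \<Rightarrow> int" where
  "weight a = gcd (fst a) (snd a)"

definition primdir :: "latN \<Rightarrow> latN" where
  "primdir a = (fst a div weight a, snd a div weight a)"

definition lattice_of :: "real \<times> real \<Rightarrow> real \<times> real \<Rightarrow> (real \<times> real) set" where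
  "lattice_of b1 b2 = {of_int i *\<^sub>R b1 + of_int j *\<^sub>R b2 | i j. True}"

text \<open>Flags (half-edges) at a vertex: (e, True) is the end of e at src e,
  (e, False) is the end of e at tgt e.  A loop gives two flags.\<close>
definition flags :: "'e set \<Rightarrow> ('e \<Rightarrow> 'v) \<Rightarrow> ('e \<Rightarrow> 'v) \<Rightarrow> 'v \<Rightarrow> ('e \<times> bool) set" where
  "flags E src tgt v = {(e, True) | e. e \<in> E \<and> src e = v} \<union> {(e, False) | e. e \<in> E \<and> tgt e = v}"

definition oslope :: "('e \<Rightarrow> latN) \<Rightarrow> 'e \<times> bool \<Rightarrow> latN" where
  "oslope u f = (if snd f then u (fst f) else - u (fst f))"

definition graph_connected :: "'v set \<Rightarrow> 'e set \<Rightarrow> ('e \<Rightarrow> 'v) \<Rightarrow> ('e \<Rightarrow> 'v) \<Rightarrow> bool" where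
  "graph_connected V E src tgt \<longleftrightarrow>
     (\<forall>v\<in>V. \<forall>w\<in>V. (v, w) \<in> ({(src e, tgt e) | e. e \<in> E} \<union> {(tgt e, src e) | e. e \<in> E})\<^sup>*)"

text \<open>A parametrized tropical curve h : Gamma \<rightarrow> TA: finite connected metric
  graph (vertices V, edges E with endpoints src, tgt and lengths len), positions
  pos of the vertices (lifts to N_R), affine edges with slope u e \<in> N from
  src e to tgt e, balanced at every vertex.\<close>
definition trop_curve ::
  "'v set \<Rightarrow> 'e set \<Rightarrow> ('e \<Rightarrow> 'v) \<Rightarrow> ('e \<Rightarrow> 'v) \<Rightarrow> ('e \<Rightarrow> real) \<Rightarrow>
   ('v \<Rightarrow> real \<times> real) \<Rightarrow> ('e \<Rightarrow> latN) \<Rightarrow> real \<times> real \<Rightarrow> real \<times> real \<Rightarrow> bool" where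
  "trop_curve V E src tgt len pos u b1 b2 \<longleftrightarrow>
     finite V \<and> finite E \<and>
     (\<forall>e\<in>E. src e \<in> V \<and> tgt e \<in> V) \<and>
     graph_connected V E src tgt \<and>
     \<not> collinear {0, b1, b2} \<and>
     (\<forall>e\<in>E. len e > 0) \<and>
     (\<forall>e\<in>E. u e \<noteq> 0) \<and>
     (\<forall>e\<in>E. pos (tgt e) - pos (src e) - len e *\<^sub>R toR (u e) \<in> lattice_of b1 b2) \<and>
     (\<forall>v\<in>V. (\<Sum>f\<in>flags E src tgt v. oslope u f) = 0)"

text \<open>simple: Gamma trivalent and h an immersion (outgoing primitive directions
  at each vertex pairwise distinct)\<close>
definition simple_trop_curve ::
  "'v set \<Rightarrow> 'e set \<Rightarrow> ('e \<Rightarrow> 'v) \<Rightarrow> ('e \<Rightarrow> 'v) \<Rightarrow> ('e \<Rightarrow> real) \<Rightarrow>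
   ('v \<Rightarrow> real \<times> real) \<Rightarrow> ('e \<Rightarrow> latN) \<Rightarrow> real \<times> real \<Rightarrow> real \<times> real \<Rightarrow> bool" where
  "simple_trop_curve V E src tgt len pos u b1 b2 \<longleftrightarrow>
     trop_curve V E src tgt len pos u b1 b2 \<and>
     (\<forall>v\<in>V. card (flags E src tgt v) = 3) \<and>
     (\<forall>v\<in>V. \<forall>f\<in>flags E src tgt v. \<forall>g\<in>flags E src tgt v.
        f \<noteq> g \<longrightarrow> primdir (oslope u f) \<noteq> primdir (oslope u g))"

definition curve_gcd :: "'e set \<Rightarrow> ('e \<Rightarrow> latN) \<Rightarrow> int" where
  "curve_gcd E u = Gcd (weight ` u ` E)"

definition vmult :: "'e set \<Rightarrow> ('e \<Rightarrow> 'v) \<Rightarrow> ('e \<Rightarrow> 'v) \<Rightarrow> ('e \<Rightarrow> latN) \<Rightarrow> 'v \<Rightarrow> int" where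
  "vmult E src tgt u v = (SOME m. \<exists>f\<in>flags E src tgt v. \<exists>g\<in>flags E src tgt v.
       f \<noteq> g \<and> m = \<bar>det2 (oslope u f) (oslope u g)\<bar>)"

end

theory Submission
  imports Defs
begin

text \<open>Modulo 2, the absolute determinant of two lattice vectors a, b equals the number of the
  three vectors a, b, -(a+b) that are congruent to (1,0) mod 2.  Summed over the vertices of a
  trivalent balanced graph, every edge slope is counted twice (once from each end, with
  opposite signs), so the sum of the vertex multiplicities is even.  Dividing all slopes by
  the gcd \<delta> of the weights multiplies each multiplicity by 1/\<delta>^2, so
  \<Sum> m_V / \<delta> = \<delta> \<cdot> \<Sum> m_V' with \<Sum> m_V' even.\<close>

definition odd_even_ind :: "latN \<Rightarrow> int" where
  "odd_even_ind a = (if odd (fst a) \<and> even (snd a) then 1 else 0)"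

lemma odd_even_ind_uminus [simp]: "odd_even_ind (- a) = odd_even_ind a"
  by (cases a) (auto simp: odd_even_ind_def)

lemma even_abs_det2_plus_odd_even_ind:
  "even (\<bar>det2 a b\<bar> + odd_even_ind a + odd_even_ind b + odd_even_ind (- (a + b)))"
proof -
  obtain a1 a2 b1 b2 where "a = (a1, a2)" "b = (b1, b2)" by (cases a, cases b)
  then show ?thesis unfolding det2_def odd_even_ind_def
    by (cases "even a1"; cases "even a2"; cases "even b1"; cases "even b2") auto
qed

lemma abs_det2_zero_sum_triple:
  assumes "a + b + c = (0 :: latN)"
  shows "\<bar>det2 b a\<bar> = \<bar>det2 a b\<bar> \<and> \<bar>det2 a c\<bar> = \<bar>det2 a b\<bar> \<and> \<bar>det2 c a\<bar> = \<bar>det2 a b\<bar> \<and>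
         \<bar>det2 b c\<bar> = \<bar>det2 a b\<bar> \<and> \<bar>det2 c b\<bar> = \<bar>det2 a b\<bar>"
proof -
  have "c = - (a + b)" using assms by (simp add: add_eq_0_iff2)
  then show ?thesis by (cases a, cases b) (simp add: det2_def algebra_simps)
qed

lemma flags_subset_edges: "f \<in> flags E src tgt v \<Longrightarrow> fst f \<in> E"
  unfolding flags_def by auto

lemma trivalent_balanced_flags:
  assumes "card (flags E src tgt v) = 3" "(\<Sum>f\<in>flags E src tgt v. oslope w f) = 0"
  obtains x y z where "flags E src tgt v = {x, y, z}" "x \<noteq> y" "y \<noteq> z" "x \<noteq> z"
    "oslope w x + oslope w y + oslope w z = 0"
proof -
  obtain x y z where F: "flags E src tgt v = {x, y, z}" "x \<noteq> y" "y \<noteq> z" "x \<noteq> z"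
    using assms(1) unfolding card_3_iff by blast
  then have "oslope w x + oslope w y + oslope w z = 0"
    using assms(2) by (simp add: add.assoc)
  with F that show ?thesis by blast
qed

text \<open>The choice in vmult is harmless at a balanced trivalent vertex: all pairs of
  distinct flags give the same absolute determinant.\<close>

lemma vmult_trivalent:
  assumes F: "flags E src tgt v = {x, y, z}" "x \<noteq> y" "y \<noteq> z" "x \<noteq> z"
    and bal: "oslope w x + oslope w y + oslope w z = 0"
  shows "vmult E src tgt w v = \<bar>det2 (oslope w x) (oslope w y)\<bar>"
proof -
  let ?m = "\<bar>det2 (oslope w x) (oslope w y)\<bar>"
  have all_pairs: "\<bar>det2 (oslope w f) (oslope w g)\<bar> = ?m"
    if "f \<in> flags E src tgt v" "g \<in> flags E src tgt v" "f \<noteq> g" for f g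
    using that abs_det2_zero_sum_triple[OF bal] unfolding F by auto
  have "\<exists>f\<in>flags E src tgt v. \<exists>g\<in>flags E src tgt v. f \<noteq> g \<and> ?m = \<bar>det2 (oslope w f) (oslope w g)\<bar>"
    using F by blast
  then have "\<exists>f\<in>flags E src tgt v. \<exists>g\<in>flags E src tgt v.
      f \<noteq> g \<and> vmult E src tgt w v = \<bar>det2 (oslope w f) (oslope w g)\<bar>"
    unfolding vmult_def by (rule someI)
  then show ?thesis using all_pairs by metis
qed

lemma sum_flags:
  fixes g :: "'e \<times> bool \<Rightarrow> 'a::comm_monoid_add"
  assumes "finite E"
  shows "(\<Sum>f\<in>flags E src tgt v. g f)
       = (\<Sum>e\<in>{e\<in>E. src e = v}. g (e, True)) + (\<Sum>e\<in>{e\<in>E. tgt e = v}. g (e, False))"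
proof -
  have "flags E src tgt v = (\<lambda>e. (e, True)) ` {e\<in>E. src e = v} \<union> (\<lambda>e. (e, False)) ` {e\<in>E. tgt e = v}"
    unfolding flags_def by auto
  then have "(\<Sum>f\<in>flags E src tgt v. g f)
      = (\<Sum>f\<in>(\<lambda>e. (e, True)) ` {e\<in>E. src e = v}. g f) + (\<Sum>f\<in>(\<lambda>e. (e, False)) ` {e\<in>E. tgt e = v}. g f)"
    using assms by (simp add: sum.union_disjoint, subst sum.union_disjoint) auto
  then show ?thesis by (simp add: sum.reindex inj_on_def)
qed

lemma even_sum_vmult:
  assumes fin: "finite V" "finite E" and ends: "\<forall>e\<in>E. src e \<in> V \<and> tgt e \<in> V"
    and tri: "\<forall>v\<in>V. card (flags E src tgt v) = 3"
    and bal: "\<forall>v\<in>V. (\<Sum>f\<in>flags E src tgt v. oslope w f) = 0"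
  shows "even (\<Sum>v\<in>V. vmult E src tgt w v)"
proof -
  define S where "S v = (\<Sum>f\<in>flags E src tgt v. odd_even_ind (oslope w f))" for v
  have even_vertex: "even (vmult E src tgt w v + S v)" if "v \<in> V" for v
  proof -
    obtain x y z where F: "flags E src tgt v = {x, y, z}" "x \<noteq> y" "y \<noteq> z" "x \<noteq> z"
      and s: "oslope w x + oslope w y + oslope w z = 0"
      using trivalent_balanced_flags tri bal \<open>v \<in> V\<close> by metis
    then have "oslope w z = - (oslope w x + oslope w y)"
      by (simp add: add_eq_0_iff2)
    moreover have "S v = odd_even_ind (oslope w x) + odd_even_ind (oslope w y) + odd_even_ind (oslope w z)"
      unfolding S_def F using F by (simp add: add.assoc)
    ultimately show ?thesis
      using vmult_trivalent[OF F s] even_abs_det2_plus_odd_even_ind[of "oslope w x" "oslope w y"]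
      by (simp add: add.assoc)
  qed
  have "(\<Sum>v\<in>V. S v) = (\<Sum>v\<in>V. \<Sum>e\<in>{e\<in>E. src e = v}. odd_even_ind (w e))
                      + (\<Sum>v\<in>V. \<Sum>e\<in>{e\<in>E. tgt e = v}. odd_even_ind (w e))"
    unfolding S_def sum_flags[OF fin(2)] by (simp add: sum.distrib oslope_def)
  also have "\<dots> = 2 * (\<Sum>e\<in>E. odd_even_ind (w e))"
    using ends by (simp add: sum.group[OF fin(2) fin(1)] image_subset_iff)
  finally have "even (\<Sum>v\<in>V. S v)" by simp
  moreover have "even (\<Sum>v\<in>V. vmult E src tgt w v + S v)"
    using even_vertex by (simp add: dvd_sum)
  ultimately show ?thesis by (simp add: sum.distrib)
qed

definition lat_scale :: "int \<Rightarrow> latN \<Rightarrow> latN" where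
  "lat_scale d a = (d * fst a, d * snd a)"

lemma det2_lat_scale: "det2 (lat_scale d a) (lat_scale d b) = d\<^sup>2 * det2 a b"
  by (simp add: lat_scale_def det2_def algebra_simps power2_eq_square)

lemma sum_lat_scale: "(\<Sum>x\<in>A. lat_scale d (g x)) = lat_scale d (sum g A)"
  by (simp add: lat_scale_def prod_eq_iff fst_sum snd_sum sum_distrib_left)

lemma lat_scale_eq_0_iff: "lat_scale d a = 0 \<longleftrightarrow> d = 0 \<or> a = 0"
  by (cases a) (auto simp: lat_scale_def zero_prod_def)

lemma lat_scale_add: "lat_scale d a + lat_scale d b = lat_scale d (a + b)"
  by (simp add: lat_scale_def algebra_simps)

lemma oslope_lat_scale:
  "u (fst f) = lat_scale d (w (fst f)) \<Longrightarrow> oslope u f = lat_scale d (oslope w f)"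
  by (simp add: oslope_def lat_scale_def)

lemma curve_gcd_divides_slope:
  assumes "e \<in> E"
  shows "u e = lat_scale (curve_gcd E u) (fst (u e) div curve_gcd E u, snd (u e) div curve_gcd E u)"
proof -
  have "curve_gcd E u dvd weight (u e)"
    unfolding curve_gcd_def using assms by (simp add: Gcd_dvd)
  then have "curve_gcd E u dvd fst (u e)" "curve_gcd E u dvd snd (u e)"
    unfolding weight_def by (meson dvd_trans gcd_dvd1 gcd_dvd2)+
  then show ?thesis by (simp add: lat_scale_def prod_eq_iff)
qed

lemma sum_vmult_lat_scale:
  assumes fin: "finite V" "finite E" and ends: "\<forall>e\<in>E. src e \<in> V \<and> tgt e \<in> V"
    and tri: "\<forall>v\<in>V. card (flags E src tgt v) = 3"
    and bal: "\<forall>v\<in>V. (\<Sum>f\<in>flags E src tgt v. oslope u f) = 0"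
    and "d \<noteq> 0" and scale: "\<forall>e\<in>E. u e = lat_scale d (w e)"
  shows "\<exists>k. (\<Sum>v\<in>V. vmult E src tgt u v) = d\<^sup>2 * (2 * k)"
proof -
  have os: "oslope u f = lat_scale d (oslope w f)" if "f \<in> flags E src tgt v" for f v
    using scale flags_subset_edges[OF that] by (simp add: oslope_lat_scale)
  have balw: "\<forall>v\<in>V. (\<Sum>f\<in>flags E src tgt v. oslope w f) = 0"
    using bal \<open>d \<noteq> 0\<close> by (simp add: os sum_lat_scale lat_scale_eq_0_iff cong: sum.cong)
  have "vmult E src tgt u v = d\<^sup>2 * vmult E src tgt w v" if "v \<in> V" for v
  proof -
    obtain x y z where F: "flags E src tgt v = {x, y, z}" "x \<noteq> y" "y \<noteq> z" "x \<noteq> z"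
      and s: "oslope w x + oslope w y + oslope w z = 0"
      using trivalent_balanced_flags tri balw \<open>v \<in> V\<close> by metis
    have xyz: "x \<in> flags E src tgt v" "y \<in> flags E src tgt v" "z \<in> flags E src tgt v"
      using F by auto
    have "oslope u x + oslope u y + oslope u z = 0"
      using s by (simp add: os[OF xyz(1)] os[OF xyz(2)] os[OF xyz(3)] lat_scale_add lat_scale_eq_0_iff)
    then show ?thesis
      by (simp add: vmult_trivalent[OF F] vmult_trivalent[OF F s] os[OF xyz(1)] os[OF xyz(2)]
          det2_lat_scale abs_mult)
  qed
  then have "(\<Sum>v\<in>V. vmult E src tgt u v) = d\<^sup>2 * (\<Sum>v\<in>V. vmult E src tgt w v)"
    by (simp add: sum_distrib_left)
  with even_sum_vmult[OF fin ends tri balw] show ?thesis by (auto elim!: evenE)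
qed

theorem mainTheorem8:
  fixes V :: "'v set" and E :: "'e set" and src tgt :: "'e \<Rightarrow> 'v"
    and len :: "'e \<Rightarrow> real" and pos :: "'v \<Rightarrow> real \<times> real"
    and u :: "'e \<Rightarrow> int \<times> int" and b1 b2 :: "real \<times> real"
  assumes "simple_trop_curve V E src tgt len pos u b1 b2"
  shows "\<exists>k::int. (\<Sum>v\<in>V. real_of_int (vmult E src tgt u v) / real_of_int (curve_gcd E u))
                 = 2 * real_of_int k"
proof -
  define d where "d = curve_gcd E u"
  show ?thesis
  proof (cases "d = 0")
    case True
    then show ?thesis unfolding d_def by simp
  next
    case False
    have scale: "\<forall>e\<in>E. u e = lat_scale d (fst (u e) div d, snd (u e) div d)"
      unfolding d_def by (intro ballI curve_gcd_divides_slope)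
    have graph: "finite V" "finite E" "\<forall>e\<in>E. src e \<in> V \<and> tgt e \<in> V"
      "\<forall>v\<in>V. card (flags E src tgt v) = 3" "\<forall>v\<in>V. (\<Sum>f\<in>flags E src tgt v. oslope u f) = 0"
      using assms unfolding simple_trop_curve_def trop_curve_def by auto
    obtain k where k: "(\<Sum>v\<in>V. vmult E src tgt u v) = d\<^sup>2 * (2 * k)"
      using sum_vmult_lat_scale[OF graph False scale] by blast
    have "(\<Sum>v\<in>V. real_of_int (vmult E src tgt u v) / real_of_int d)
        = real_of_int (\<Sum>v\<in>V. vmult E src tgt u v) / real_of_int d"
      by (simp add: sum_divide_distrib)
    also have "\<dots> = 2 * real_of_int (d * k)"
      using False unfolding k by (simp add: power2_eq_square)
    finally show ?thesis unfolding d_def by (rule exI)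
  qed
qed

end
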